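(* Let $\Theta$ be a branch of a tableau of $\mathbf{TAB}_{\mathbf{IB}}$, let $N^\Theta$ be the set of nominals occurring in $\Theta$, and let $\prec_\Theta$ be the generation relation on $N^\Theta$. Then the structure $G=(N^\Theta,\prec_\Theta)$ is a finite set of well-founded and finitely branching trees.
   Context: Hybrid language: fix disjoint countably infinite sets $\mathbf{Prop}$ (propositional variables) and $\mathbf{Nom}$ (nominals). Formulas: $\varphi ::= p \mid i \mid \neg\varphi \mid \varphi\land\varphi \mid \Diamond\varphi \mid @_i\varphi$ with $p\in\mathbf{Prop}$, $i\in\mathbf{Nom}$; $\Box\varphi$ abbreviates $\neg\Diamond\neg\varphi$. Tableau calculus $\mathbf{TAB}_{\mathbf{IB}}$. A tableau is a well-founded tree whose nodes are formulas of the form $@_i\varphi$; its root is a formula $@_i\varphi$ (the root formula) where $i$ does not occur in $\varphi$. A branch is a maximal path; $\varphi\in\Theta$ means $\varphi$ occurs on branch $\Theta$. Each branch is extended by applying the rules below to its formulas as often as possible, except that no further formula is added to a branch once either (i) every new formula generated by applying any rule already occurs on the branch, or (ii) the branch is closed, i.e. contains $@_i\varphi$ and $@_i\neg\varphi$ for some formula $\varphi$ and nominal $i$. An accessibility formula is a formula $@_i\Diamond j$ added by rule $[\Diamond]$ (with $j$ the new nominal). Rules (premises already on the branch; conclusions added to it): [$\neg\neg$] from $@_i\neg\neg\varphi$ add $@_i\varphi$; [$\land$] from $@_i(\varphi\land\psi)$ add $@_i\varphi$ and $@_i\psi$; [$\neg\land$] from $@_i\neg(\varphi\land\psi)$ split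 the branch into one extended by $@_i\neg\varphi$ and one extended by $@_i\neg\psi$; [$\Diamond$] from $@_i\Diamond\varphi$, which is not an accessibility formula, add $@_i\Diamond j$ and $@_j\varphi$ where $j$ is a nominal not occurring on the branch; this rule is applied at most once per formula, and only if $i$ is a quasi-urfather on the branch (defined below); [$\neg\Diamond$] from $@_i\neg\Diamond\varphi$ and $@_i\Diamond j$ add $@_j\neg\varphi$; [$\Box_{sym}$] from $@_i\Box\varphi$ and $@_j\Diamond i$ add $@_j\varphi$; [$@$] from $@_i@_j\varphi$ add $@_j\varphi$; [$\neg@$] from $@_i\neg@_j\varphi$ add $@_j\neg\varphi$; [$Id$] from $@_i\varphi$, which is not an accessibility formula, and $@_i j$ add $@_j\varphi$; [$Ref$] for any nominal $i$ occurring on the branch add $@_i i$; ($\mathcal{I}$) for any nominal $i$ occurring on the branch add $@_i\neg\Diamond i$. Auxiliary notions for a branch $\Theta$. $@_i\varphi$ is a quasi-subformula of $@_j\psi$ if $\varphi$ is a subformula of $\psi$, or $\varphi=\neg\chi$ with $\chi$ a subformula of $\psi$. For a nominal $i$ occurring in $\Theta$, $T^\Theta(i)=\{\varphi \mid @_i\varphi\in\Theta$ and $@_i\varphi$ is a quasi-subformula of the root formula$\}$. Nominals $i,j$ are twins if $T^\Theta(i)=T^\Theta(j)$. The generation relation: $i\prec_\Theta j$ if $j$ was introduced by applying $[\Diamond]$ to a formula $@_i\Diamond\varphi$ (equivalently, the accessibility formula $@_i\Diamond j$ is in $\Theta$); $\prec_\Theta^*$ is its reflexive transitive closure. A nominal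 $i$ is a quasi-urfather on $\Theta$ if there are no twins $j\neq k$ with $j\prec_\Theta^* i$ and $k\prec_\Theta^* i$. *)

theory Defs
  imports Main
begin

(* Propositional variables and nominals are both represented by nat
   (two disjoint countably infinite sets, distinguished by constructor). *)
datatype form =
    Pr nat
  | Nm nat
  | Neg form
  | Conj form form
  | Dia form
  | At nat form

definition Box :: "form \<Rightarrow> form" where
  "Box \<phi> = Neg (Dia (Neg \<phi>))"

(* A tableau node @_i phi is represented as the pair (i, phi). *)
type_synonym node = "nat \<times> form"
(* Record of [Dia]-applications: (i, phi, j) means [Dia] was applied to
   @_i Dia phi, introducing the new nominal j (accessibility formula @_i Dia j). *)
type_synonym accrec = "nat \<times> form \<times> nat"
type_synonym state = "node set \<times> accrec set"

fun nomsf :: "form \<Rightarrow> nat set" where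
  "nomsf (Pr p) = {}"
| "nomsf (Nm i) = {i}"
| "nomsf (Neg \<phi>) = nomsf \<phi>"
| "nomsf (Conj \<phi> \<psi>) = nomsf \<phi> \<union> nomsf \<psi>"
| "nomsf (Dia \<phi>) = nomsf \<phi>"
| "nomsf (At i \<phi>) = insert i (nomsf \<phi>)"

fun subf :: "form \<Rightarrow> form set" where
  "subf (Pr p) = {Pr p}"
| "subf (Nm i) = {Nm i}"
| "subf (Neg \<phi>) = insert (Neg \<phi>) (subf \<phi>)"
| "subf (Conj \<phi> \<psi>) = insert (Conj \<phi> \<psi>) (subf \<phi> \<union> subf \<psi>)"
| "subf (Dia \<phi>) = insert (Dia \<phi>) (subf \<phi>)"
| "subf (At i \<phi>) = insert (At i \<phi>) (subf \<phi>)"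

definition noms :: "node set \<Rightarrow> nat set" where
  "noms F = (\<Union>(i, \<phi>)\<in>F. insert i (nomsf \<phi>))"

definition closed :: "node set \<Rightarrow> bool" where
  "closed F \<longleftrightarrow> (\<exists>i \<phi>. (i, \<phi>) \<in> F \<and> (i, Neg \<phi>) \<in> F)"

definition acc :: "accrec set \<Rightarrow> nat \<Rightarrow> form \<Rightarrow> bool" where
  "acc A i \<phi> \<longleftrightarrow> (\<exists>j \<psi>. \<phi> = Dia (Nm j) \<and> (i, \<psi>, j) \<in> A)"

definition quasi_sub :: "form \<Rightarrow> form \<Rightarrow> bool" where
  "quasi_sub \<phi> \<psi> \<longleftrightarrow> \<phi> \<in> subf \<psi> \<or> (\<exists>\<chi>. \<phi> = Neg \<chi> \<and> \<chi> \<in> subf \<psi>)"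

definition Tset :: "form \<Rightarrow> node set \<Rightarrow> nat \<Rightarrow> form set" where
  "Tset \<psi> F i = {\<phi>. (i, \<phi>) \<in> F \<and> quasi_sub \<phi> \<psi>}"

definition gen :: "accrec set \<Rightarrow> nat \<Rightarrow> nat \<Rightarrow> bool" where
  "gen A i j \<longleftrightarrow> (\<exists>\<phi>. (i, \<phi>, j) \<in> A)"

definition quasi_urfather :: "form \<Rightarrow> state \<Rightarrow> nat \<Rightarrow> bool" where
  "quasi_urfather \<psi> st i \<longleftrightarrow>
     \<not> (\<exists>j k. j \<in> noms (fst st) \<and> k \<in> noms (fst st) \<and> j \<noteq> k \<and>
            Tset \<psi> (fst st) j = Tset \<psi> (fst st) k \<and>
            (gen (snd st))\<^sup>*\<^sup>* j i \<and> (gen (snd st))\<^sup>*\<^sup>* k i)"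

(* Instances of all rules except [Dia], given by their list of alternative
   conclusion sets (one alternative per resulting branch). *)
definition nd_inst :: "state \<Rightarrow> node set list \<Rightarrow> bool" where
  "nd_inst st alts \<longleftrightarrow> (let F = fst st; A = snd st in
     (\<exists>i \<phi>. (i, Neg (Neg \<phi>)) \<in> F \<and> alts = [{(i, \<phi>)}])
   \<or> (\<exists>i \<phi> \<psi>. (i, Conj \<phi> \<psi>) \<in> F \<and> alts = [{(i, \<phi>), (i, \<psi>)}])
   \<or> (\<exists>i \<phi> \<psi>. (i, Neg (Conj \<phi> \<psi>)) \<in> F \<and> alts = [{(i, Neg \<phi>)}, {(i, Neg \<psi>)}])
   \<or> (\<exists>i \<phi> j. (i, Neg (Dia \<phi>)) \<in> F \<and> (i, Dia (Nm j)) \<in> F \<and> alts = [{(j, Neg \<phi>)}])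
   \<or> (\<exists>i \<phi> j. (i, Box \<phi>) \<in> F \<and> (j, Dia (Nm i)) \<in> F \<and> alts = [{(j, \<phi>)}])
   \<or> (\<exists>i j \<phi>. (i, At j \<phi>) \<in> F \<and> alts = [{(j, \<phi>)}])
   \<or> (\<exists>i j \<phi>. (i, Neg (At j \<phi>)) \<in> F \<and> alts = [{(j, Neg \<phi>)}])
   \<or> (\<exists>i j \<phi>. (i, \<phi>) \<in> F \<and> \<not> acc A i \<phi> \<and> (i, Nm j) \<in> F \<and> alts = [{(j, \<phi>)}])
   \<or> (\<exists>i. i \<in> noms F \<and> alts = [{(i, Nm i)}])
   \<or> (\<exists>i. i \<in> noms F \<and> alts = [{(i, Neg (Dia (Nm i)))}]))"

definition enabled_nd :: "state \<Rightarrow> node set list \<Rightarrow> bool" where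
  "enabled_nd st alts \<longleftrightarrow> nd_inst st alts \<and> \<not> closed (fst st) \<and>
     (\<forall>C\<in>set alts. \<not> C \<subseteq> fst st)"

definition enabled_dia :: "form \<Rightarrow> state \<Rightarrow> nat \<Rightarrow> form \<Rightarrow> bool" where
  "enabled_dia \<psi> st i \<phi> \<longleftrightarrow> (i, Dia \<phi>) \<in> fst st \<and> \<not> acc (snd st) i (Dia \<phi>) \<and>
     \<not> (\<exists>j. (i, \<phi>, j) \<in> snd st) \<and> quasi_urfather \<psi> st i \<and> \<not> closed (fst st)"

definition step :: "form \<Rightarrow> state \<Rightarrow> state \<Rightarrow> bool" where
  "step \<psi> st st' \<longleftrightarrow>
     (\<exists>alts C. enabled_nd st alts \<and> C \<in> set alts \<and> st' = (fst st \<union> C, snd st))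
   \<or> (\<exists>i \<phi> j. enabled_dia \<psi> st i \<phi> \<and> j \<notin> noms (fst st) \<and>
        st' = (fst st \<union> {(i, Dia (Nm j)), (j, \<phi>)}, insert (i, \<phi>, j) (snd st)))"

definition saturated :: "form \<Rightarrow> state \<Rightarrow> bool" where
  "saturated \<psi> st \<longleftrightarrow> \<not> (\<exists>alts. enabled_nd st alts) \<and> \<not> (\<exists>i \<phi>. enabled_dia \<psi> st i \<phi>)"

(* S enumerates the successive stages of one branch of a TAB_IB tableau with
   root formula @_r psi: every stage is obtained by one rule application, the
   construction stops only when no rule can add anything new or the branch is
   closed, and (for infinite branches) no rule instance stays applicable forever. *)
definition tab_branch :: "nat \<Rightarrow> form \<Rightarrow> (nat \<Rightarrow> state) \<Rightarrow> bool" where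
  "tab_branch r \<psi> S \<longleftrightarrow>
     r \<notin> nomsf \<psi> \<and>
     S 0 = ({(r, \<psi>)}, {}) \<and>
     (\<forall>n. step \<psi> (S n) (S (Suc n)) \<or> (S (Suc n) = S n \<and> saturated \<psi> (S n))) \<and>
     (\<forall>n alts. enabled_nd (S n) alts \<longrightarrow> (\<exists>m\<ge>n. \<not> enabled_nd (S m) alts)) \<and>
     (\<forall>n i \<phi>. enabled_dia \<psi> (S n) i \<phi> \<longrightarrow> (\<exists>m\<ge>n. \<not> enabled_dia \<psi> (S m) i \<phi>))"

definition branch_nodes :: "(nat \<Rightarrow> state) \<Rightarrow> node set" where
  "branch_nodes S = (\<Union>n. fst (S n))"

definition branch_noms :: "(nat \<Rightarrow> state) \<Rightarrow> nat set" where
  "branch_noms S = noms (branch_nodes S)"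

definition gen_rel :: "(nat \<Rightarrow> state) \<Rightarrow> (nat \<times> nat) set" where
  "gen_rel S = {(i, j). \<exists>n. gen (snd (S n)) i j}"

definition finite_wf_fb_forest :: "'a set \<Rightarrow> ('a \<times> 'a) set \<Rightarrow> bool" where
  "finite_wf_fb_forest N G \<longleftrightarrow>
     G \<subseteq> N \<times> N \<and>
     (\<forall>i i' j. (i, j) \<in> G \<and> (i', j) \<in> G \<longrightarrow> i = i') \<and>
     finite {r \<in> N. \<forall>i. (i, r) \<notin> G} \<and>
     (\<forall>j\<in>N. \<exists>r\<in>N. (\<forall>i. (i, r) \<notin> G) \<and> (r, j) \<in> G\<^sup>*) \<and>
     wf G \<and>
     (\<forall>i\<in>N. finite {j. (i, j) \<in> G})"

end

theory Submission
  imports Defs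
begin

(* Every generation edge i -> j is produced by a single [Dia] step, which introduces j as a
   fresh nominal. Ranking nominals by the stage at which they first occur on the branch
   (birth), edges strictly increase the rank, so the relation is well-founded; and since j
   is born at exactly one step, it has exactly one parent. A nominal without a parent was
   never introduced by [Dia], so it occurs in the root formula: there are finitely many
   roots. Finally, an invariant on the shape of branch formulas (admissible) shows that
   [Dia] is applied only to premises @_i Dia phi with Dia phi a subformula of the root, and
   to each such premise at most once, so every nominal has finitely many children. *)

lemma subf_refl [simp]: "\<phi> \<in> subf \<phi>"
  by (cases \<phi>) auto

lemma subf_trans: "\<chi> \<in> subf \<phi> \<Longrightarrow> \<phi> \<in> subf \<psi> \<Longrightarrow> \<chi> \<in> subf \<psi>"
  by (induction \<psi>) auto

lemma finite_subf: "finite (subf \<psi>)"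
  by (induction \<psi>) auto

lemma finite_nomsf: "finite (nomsf \<psi>)"
  by (induction \<psi>) auto

lemma subf_immediateD:
  "Neg \<phi> \<in> subf \<psi> \<Longrightarrow> \<phi> \<in> subf \<psi>"
  "Conj \<phi> \<chi> \<in> subf \<psi> \<Longrightarrow> \<phi> \<in> subf \<psi>"
  "Conj \<phi> \<chi> \<in> subf \<psi> \<Longrightarrow> \<chi> \<in> subf \<psi>"
  "Dia \<phi> \<in> subf \<psi> \<Longrightarrow> \<phi> \<in> subf \<psi>"
  "At j \<phi> \<in> subf \<psi> \<Longrightarrow> \<phi> \<in> subf \<psi>"
  by (auto intro: subf_trans[rotated])

lemma noms_Un [simp]: "noms (F \<union> G) = noms F \<union> noms G"
  and noms_insert [simp]: "noms (insert (i, \<phi>) F) = insert i (nomsf \<phi> \<union> noms F)"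
  and noms_empty [simp]: "noms {} = {}"
  by (auto simp: noms_def)

lemma noms_mono: "F \<subseteq> G \<Longrightarrow> noms F \<subseteq> noms G"
  by (auto simp: noms_def)

lemma noms_node: "(i, \<phi>) \<in> F \<Longrightarrow> insert i (nomsf \<phi>) \<subseteq> noms F"
  by (auto simp: noms_def)

lemma branch_noms_eq: "branch_noms S = (\<Union>n. noms (fst (S n)))"
  by (auto simp: branch_noms_def branch_nodes_def noms_def)

lemma finite_Collect_unique:
  assumes "\<And>x y. P x \<Longrightarrow> P y \<Longrightarrow> x = y"
  shows "finite {x. P x}"
proof (cases "\<exists>x. P x")
  case True
  then obtain x where "P x" by blast
  then have "{x. P x} \<subseteq> {x}" using assms by blast
  then show ?thesis by (rule finite_subset) simp
qed simp

lemma wf_root_ancestor: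
  assumes "wf G" "G \<subseteq> N \<times> N" "j \<in> N"
  shows "\<exists>r\<in>N. (\<forall>i. (i, r) \<notin> G) \<and> (r, j) \<in> G\<^sup>*"
proof -
  obtain r where r: "r \<in> {i. (i, j) \<in> G\<^sup>*}"
    and minimal: "\<And>i. (i, r) \<in> G \<Longrightarrow> i \<notin> {i. (i, j) \<in> G\<^sup>*}"
    using wfE_min[OF assms(1), of j "{i. (i, j) \<in> G\<^sup>*}"] by blast
  have "\<forall>i. (i, r) \<notin> G"
    using minimal r by (auto intro: converse_rtrancl_into_rtrancl)
  moreover have "r \<in> N"
    using r assms(2,3) by (auto elim: converse_rtranclE)
  ultimately show ?thesis using r by blast
qed

lemma finite_wf_fb_forestI:
  assumes "G \<subseteq> N \<times> N"
    and "\<And>i i' j. (i, j) \<in> G \<Longrightarrow> (i', j) \<in> G \<Longrightarrow> i = i'"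
    and "finite {r \<in> N. \<forall>i. (i, r) \<notin> G}"
    and "wf G"
    and "\<And>i. i \<in> N \<Longrightarrow> finite {j. (i, j) \<in> G}"
  shows "finite_wf_fb_forest N G"
  using assms wf_root_ancestor[OF assms(4,1)] unfolding finite_wf_fb_forest_def by blast

lemma Least_mono_entry:
  fixes X :: "nat \<Rightarrow> 'a set"
  assumes "mono X" "x \<notin> X n" "x \<in> X (Suc n)"
  shows "(LEAST m. x \<in> X m) = Suc n"
proof (rule Least_equality)
  show "x \<in> X (Suc n)" by (fact assms(3))
next
  fix m assume "x \<in> X m"
  then show "Suc n \<le> m"
    using assms(1,2) by (meson monoD not_less_eq_eq subsetD)
qed

(* The only formulas on a branch outside the quasi-subformulas of the root are those
   produced by [Ref], (I), [Dia] (accessibility formulas) and [neg-Dia] applied to (I),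
   and their copies under [Id]. *)
definition admissible :: "form \<Rightarrow> accrec set \<Rightarrow> nat \<Rightarrow> form \<Rightarrow> bool" where
  "admissible \<psi> A i \<phi> \<longleftrightarrow> quasi_sub \<phi> \<psi> \<or> (\<exists>j. \<phi> = Nm j) \<or> (\<exists>j. \<phi> = Neg (Nm j))
     \<or> (\<exists>j. \<phi> = Neg (Dia (Nm j))) \<or> (\<exists>j. \<phi> = Dia (Nm j) \<and> acc A i \<phi>)"

definition admissible_state :: "form \<Rightarrow> state \<Rightarrow> bool" where
  "admissible_state \<psi> st \<longleftrightarrow> (\<forall>(i, \<phi>)\<in>fst st. admissible \<psi> (snd st) i \<phi>)"

lemma admissible_mono: "admissible \<psi> A i \<phi> \<Longrightarrow> A \<subseteq> A' \<Longrightarrow> admissible \<psi> A' i \<phi>"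
  unfolding admissible_def acc_def by blast

lemma admissible_compound [simp]:
  "admissible \<psi> A i (Conj \<phi> \<chi>) \<longleftrightarrow> Conj \<phi> \<chi> \<in> subf \<psi>"
  "admissible \<psi> A i (At j \<phi>) \<longleftrightarrow> At j \<phi> \<in> subf \<psi>"
  "admissible \<psi> A i (Neg (Neg \<phi>)) \<longleftrightarrow> Neg \<phi> \<in> subf \<psi>"
  "admissible \<psi> A i (Neg (Conj \<phi> \<chi>)) \<longleftrightarrow> Conj \<phi> \<chi> \<in> subf \<psi>"
  "admissible \<psi> A i (Neg (At j \<phi>)) \<longleftrightarrow> At j \<phi> \<in> subf \<psi>"
  "admissible \<psi> A i (Neg (Dia \<phi>)) \<longleftrightarrow> Dia \<phi> \<in> subf \<psi> \<or> (\<exists>k. \<phi> = Nm k)"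
  by (auto simp: admissible_def quasi_sub_def dest: subf_immediateD)

lemma admissible_subf:
  "\<phi> \<in> subf \<psi> \<Longrightarrow> admissible \<psi> A i \<phi>"
  "\<phi> \<in> subf \<psi> \<Longrightarrow> admissible \<psi> A i (Neg \<phi>)"
  by (auto simp: admissible_def quasi_sub_def)

lemma admissible_nominal [simp]:
  "admissible \<psi> A i (Nm j)"
  "admissible \<psi> A i (Neg (Nm j))"
  "admissible \<psi> A i (Neg (Dia (Nm j)))"
  by (auto simp: admissible_def)

lemma admissible_transfer: "admissible \<psi> A i \<phi> \<Longrightarrow> \<not> acc A i \<phi> \<Longrightarrow> admissible \<psi> A j \<phi>"
  by (auto simp: admissible_def)

lemma admissible_Dia:
  assumes "admissible \<psi> A i (Dia \<phi>)" "\<not> acc A i (Dia \<phi>)"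
  shows "Dia \<phi> \<in> subf \<psi>"
  using assms by (auto simp: admissible_def quasi_sub_def)

lemma nd_inst_admissible:
  assumes "admissible_state \<psi> st" "nd_inst st alts" "C \<in> set alts" "(i, \<phi>) \<in> C"
  shows "admissible \<psi> (snd st) i \<phi>"
proof -
  have prem: "admissible \<psi> (snd st) j \<chi>" if "(j, \<chi>) \<in> fst st" for j \<chi>
    using assms(1) that unfolding admissible_state_def by blast
  show ?thesis
    using assms(2-) unfolding nd_inst_def Let_def
    by (elim disjE exE conjE; clarsimp simp: Box_def dest!: prem)
      (auto dest: subf_immediateD intro: admissible_subf admissible_transfer)
qed

lemma nd_inst_noms:
  assumes "nd_inst st alts" "C \<in> set alts"
  shows "noms C \<subseteq> noms (fst st)"
  using assms unfolding nd_inst_def Let_def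
  by (elim disjE exE conjE; auto simp: Box_def dest!: noms_node)

definition dia_step :: "form \<Rightarrow> state \<Rightarrow> nat \<Rightarrow> form \<Rightarrow> nat \<Rightarrow> state \<Rightarrow> bool" where
  "dia_step \<psi> st i \<phi> j st' \<longleftrightarrow> enabled_dia \<psi> st i \<phi> \<and> j \<notin> noms (fst st) \<and>
     st' = (fst st \<union> {(i, Dia (Nm j)), (j, \<phi>)}, insert (i, \<phi>, j) (snd st))"

lemma step_cases:
  assumes "step \<psi> st st'"
  obtains alts C where "enabled_nd st alts" "C \<in> set alts" "st' = (fst st \<union> C, snd st)"
  | i \<phi> j where "dia_step \<psi> st i \<phi> j st'"
  using assms unfolding step_def dia_step_def by blast

lemma dia_step_noms:
  assumes "dia_step \<psi> st i \<phi> j st'"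
  shows "i \<in> noms (fst st)" "j \<notin> noms (fst st)" "j \<in> noms (fst st')"
  using assms noms_node[of i "Dia \<phi>" "fst st"] by (auto simp: dia_step_def enabled_dia_def)

lemma dia_step_record:
  assumes "dia_step \<psi> st i \<phi> j st'"
  shows "(i, \<phi>, k) \<notin> snd st" "snd st' = insert (i, \<phi>, j) (snd st)"
  using assms by (auto simp: dia_step_def enabled_dia_def)

lemma step_mono:
  assumes "step \<psi> st st'"
  shows "fst st \<subseteq> fst st'" "snd st \<subseteq> snd st'"
  using assms by (auto simp: step_def)

lemma step_new_record:
  assumes "step \<psi> st st'" "x \<notin> snd st" "x \<in> snd st'"
  obtains i \<phi> j where "x = (i, \<phi>, j)" "dia_step \<psi> st i \<phi> j st'"
  using assms by (cases rule: step_cases) (auto simp: dia_step_def)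

lemma step_noms:
  assumes "step \<psi> st st'"
  shows "noms (fst st') \<subseteq> noms (fst st) \<union> {j. \<exists>i. gen (snd st') i j}"
  using assms
proof (cases rule: step_cases)
  case (1 alts C)
  then show ?thesis using nd_inst_noms[of st alts C] by (auto simp: enabled_nd_def)
next
  case (2 i \<phi> j)
  then show ?thesis using dia_step_noms(1)[OF 2] noms_node[of i "Dia \<phi>" "fst st"]
    by (auto simp: dia_step_def enabled_dia_def gen_def)
qed

lemma dia_step_subf:
  assumes "admissible_state \<psi> st" "dia_step \<psi> st i \<phi> j st'"
  shows "Dia \<phi> \<in> subf \<psi>"
proof -
  have "(i, Dia \<phi>) \<in> fst st" "\<not> acc (snd st) i (Dia \<phi>)"
    using assms(2) by (auto simp: dia_step_def enabled_dia_def)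
  then show ?thesis
    using assms(1) admissible_Dia unfolding admissible_state_def by blast
qed

lemma step_admissible:
  assumes "admissible_state \<psi> st" "step \<psi> st st'"
  shows "admissible_state \<psi> st'"
  using assms(2)
proof (cases rule: step_cases)
  case (1 alts C)
  then show ?thesis using assms(1) nd_inst_admissible[OF assms(1)]
    by (auto simp: admissible_state_def enabled_nd_def)
next
  case (2 i \<phi> j)
  let ?A = "insert (i, \<phi>, j) (snd st)"
  have "admissible \<psi> ?A j \<phi>"
    using dia_step_subf[OF assms(1) 2] by (auto dest: subf_immediateD intro: admissible_subf)
  moreover have "admissible \<psi> ?A i (Dia (Nm j))"
    by (auto simp: admissible_def acc_def)
  moreover have "admissible \<psi> ?A k \<chi>" if "(k, \<chi>) \<in> fst st" for k \<chi>
    using assms(1) that admissible_mono[of \<psi> "snd st" k \<chi> ?A] unfolding admissible_state_def by blast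
  ultimately show ?thesis using 2 by (auto simp: dia_step_def admissible_state_def)
qed

definition birth :: "(nat \<Rightarrow> state) \<Rightarrow> nat \<Rightarrow> nat" where
  "birth S j = (LEAST n. j \<in> noms (fst (S n)))"

context
  fixes r \<psi> S
  assumes branch: "tab_branch r \<psi> S"
begin

lemma branch_step: "step \<psi> (S n) (S (Suc n)) \<or> S (Suc n) = S n"
  using branch by (auto simp: tab_branch_def)

lemma branch_start: "S 0 = ({(r, \<psi>)}, {})"
  using branch by (auto simp: tab_branch_def)

lemma mono_stage_nodes: "mono (\<lambda>n. fst (S n))"
  unfolding mono_iff_le_Suc using branch_step step_mono(1) by fastforce

lemma mono_stage_records: "mono (\<lambda>n. snd (S n))"
  unfolding mono_iff_le_Suc using branch_step step_mono(2) by fastforce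

lemma mono_stage_noms: "mono (\<lambda>n. noms (fst (S n)))"
  using mono_stage_nodes noms_mono by (auto simp: mono_def)

lemma stage_admissible: "admissible_state \<psi> (S n)"
proof (induction n)
  case 0
  then show ?case using branch_start by (simp add: admissible_state_def admissible_subf)
next
  case (Suc n)
  then show ?case using branch_step[of n] step_admissible by metis
qed

lemma stage_noms: "noms (fst (S n)) \<subseteq> insert r (nomsf \<psi>) \<union> {j. \<exists>i. gen (snd (S n)) i j}"
proof (induction n)
  case 0
  then show ?case using branch_start by auto
next
  case (Suc n)
  have "snd (S n) \<subseteq> snd (S (Suc n))"
    using monoD[OF mono_stage_records, of n "Suc n"] by simp
  then have "{j. \<exists>i. gen (snd (S n)) i j} \<subseteq> {j. \<exists>i. gen (snd (S (Suc n))) i j}"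
    by (auto simp: gen_def)
  moreover have "noms (fst (S (Suc n))) \<subseteq> noms (fst (S n)) \<union> {j. \<exists>i. gen (snd (S (Suc n))) i j}"
    using branch_step[of n] step_noms[of \<psi> "S n" "S (Suc n)"] by auto
  ultimately show ?case
    using Suc.IH by blast
qed

lemma gen_rel_dia_step:
  assumes "(a, b) \<in> gen_rel S"
  obtains n \<phi> where "dia_step \<psi> (S n) a \<phi> b (S (Suc n))"
proof -
  obtain m \<phi> where "(a, \<phi>, b) \<in> snd (S m)"
    using assms by (auto simp: gen_rel_def gen_def)
  moreover have "(a, \<phi>, b) \<notin> snd (S 0)"
    using branch_start by simp
  ultimately obtain n where new: "(a, \<phi>, b) \<notin> snd (S n)" "(a, \<phi>, b) \<in> snd (S (Suc n))"
    using ex_least_nat_less[of "\<lambda>n. (a, \<phi>, b) \<in> snd (S n)"] by blast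
  then have "step \<psi> (S n) (S (Suc n))"
    using branch_step by force
  then show thesis
    using new by (rule step_new_record) (auto intro: that)
qed

lemma dia_step_birth:
  assumes "dia_step \<psi> (S n) a \<phi> b (S (Suc n))"
  shows "birth S a \<le> n" "birth S b = Suc n"
  unfolding birth_def
  using Least_le[where P = "\<lambda>m. a \<in> noms (fst (S m))", OF dia_step_noms(1)[OF assms]]
    Least_mono_entry[OF mono_stage_noms dia_step_noms(2,3)[OF assms]] by auto

lemma gen_rel_subset: "gen_rel S \<subseteq> branch_noms S \<times> branch_noms S"
proof (rule subrelI)
  fix a b assume "(a, b) \<in> gen_rel S"
  then obtain n \<phi> where step: "dia_step \<psi> (S n) a \<phi> b (S (Suc n))"
    by (rule gen_rel_dia_step)
  show "(a, b) \<in> branch_noms S \<times> branch_noms S"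
    using dia_step_noms(1,3)[OF step] unfolding branch_noms_eq by blast
qed

lemma gen_rel_birth_less:
  assumes "(a, b) \<in> gen_rel S"
  shows "birth S a < birth S b"
proof -
  obtain n \<phi> where "dia_step \<psi> (S n) a \<phi> b (S (Suc n))"
    using assms by (rule gen_rel_dia_step)
  then show ?thesis
    using dia_step_birth by fastforce
qed

lemma wf_gen_rel: "wf (gen_rel S)"
  using gen_rel_birth_less by (intro wf_subset[OF wf_measure]) auto

lemma gen_rel_parent_unique:
  assumes "(a, b) \<in> gen_rel S" "(a', b) \<in> gen_rel S"
  shows "a = a'"
proof -
  obtain n \<phi> where step: "dia_step \<psi> (S n) a \<phi> b (S (Suc n))"
    using assms(1) by (rule gen_rel_dia_step)
  obtain n' \<phi>' where step': "dia_step \<psi> (S n') a' \<phi>' b (S (Suc n'))"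
    using assms(2) by (rule gen_rel_dia_step)
  have "n = n'"
    using dia_step_birth(2)[OF step] dia_step_birth(2)[OF step'] by simp
  then show ?thesis
    using dia_step_record[OF step] dia_step_record[OF step'] by auto
qed

lemma gen_rel_roots: "{x \<in> branch_noms S. \<forall>i. (i, x) \<notin> gen_rel S} \<subseteq> insert r (nomsf \<psi>)"
  using stage_noms unfolding branch_noms_eq gen_rel_def by blast

lemma dia_step_unique:
  assumes "dia_step \<psi> (S n) a \<phi> b (S (Suc n))" "dia_step \<psi> (S n') a \<phi> b' (S (Suc n'))"
  shows "b = b'"
proof -
  have earlier: "\<not> m < m'"
    if "dia_step \<psi> (S m) a \<phi> c (S (Suc m))" "dia_step \<psi> (S m') a \<phi> c' (S (Suc m'))"
    for m m' c c'
  proof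
    assume "m < m'"
    then have "snd (S (Suc m)) \<subseteq> snd (S m')"
      using monoD[OF mono_stage_records, of "Suc m" m'] by simp
    then show False
      using dia_step_record[OF that(1)] dia_step_record(1)[OF that(2), of c] by auto
  qed
  have "n = n'"
    using earlier[OF assms] earlier[OF assms(2,1)] by simp
  then have "(a, \<phi>, b) \<in> insert (a, \<phi>, b') (snd (S n))"
    using dia_step_record(2)[OF assms(1)] dia_step_record(2)[OF assms(2)] by simp
  then show ?thesis
    using dia_step_record(1)[OF assms(1)] by blast
qed

lemma finite_gen_rel_children: "finite {b. (a, b) \<in> gen_rel S}"
proof (rule finite_subset)
  let ?child = "\<lambda>\<phi> b. \<exists>n. dia_step \<psi> (S n) a \<phi> b (S (Suc n))"
  show "{b. (a, b) \<in> gen_rel S} \<subseteq> (\<Union>\<phi>\<in>Dia -` subf \<psi>. {b. ?child \<phi> b})"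
  proof
    fix b assume "b \<in> {b. (a, b) \<in> gen_rel S}"
    then obtain n \<phi> where step: "dia_step \<psi> (S n) a \<phi> b (S (Suc n))"
      by (auto elim: gen_rel_dia_step)
    then show "b \<in> (\<Union>\<phi>\<in>Dia -` subf \<psi>. {b. ?child \<phi> b})"
      using dia_step_subf[OF stage_admissible step] by blast
  qed
  have "finite (Dia -` subf \<psi>)"
    by (rule finite_vimageI) (auto simp: finite_subf inj_def)
  moreover have "finite {b. ?child \<phi> b}" for \<phi>
    by (rule finite_Collect_unique) (use dia_step_unique in blast)
  ultimately show "finite (\<Union>\<phi>\<in>Dia -` subf \<psi>. {b. ?child \<phi> b})"
    by blast
qed

end

theorem lemma3:
  assumes "tab_branch r \<psi> S"
  shows "finite_wf_fb_forest (branch_noms S) (gen_rel S)"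
proof (rule finite_wf_fb_forestI)
  show "gen_rel S \<subseteq> branch_noms S \<times> branch_noms S"
    using assms by (rule gen_rel_subset)
  show "\<And>i i' j. (i, j) \<in> gen_rel S \<Longrightarrow> (i', j) \<in> gen_rel S \<Longrightarrow> i = i'"
    using assms by (rule gen_rel_parent_unique)
  show "finite {x \<in> branch_noms S. \<forall>i. (i, x) \<notin> gen_rel S}"
    using gen_rel_roots[OF assms] by (rule finite_subset) (simp add: finite_nomsf)
  show "wf (gen_rel S)"
    using assms by (rule wf_gen_rel)
  show "\<And>i. i \<in> branch_noms S \<Longrightarrow> finite {j. (i, j) \<in> gen_rel S}"
    using assms by (rule finite_gen_rel_children)
qed

end
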